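(* Let $k\in\{1,\dots,K\}$ and $\epsilon>0$. Let $\Lambda\subset\mathbb N$ be a random set of instants and $(\Lambda(s))_{s\ge1}$ random sets such that (i) $\Lambda\subset\bigcup_{s\ge1}\Lambda(s)$; (ii) for all $s\ge1$ and $n\in\Lambda(s)$, $t_k(n)\ge\epsilon s$; (iii) $|\Lambda(s)|\le1$ for all $s$; (iv) for each $n$, the event $\{n\in\Lambda(s)\}$ is $\mathcal F_n$-measurable. Then for every $\delta>0$, $$\mathbb E\Big[\sum_{n\ge1}\mathbf 1\{n\in\Lambda,\ |\hat\mu_k(n)-\mu_k|>\delta\}\Big]\le\frac1{\epsilon\delta^2}.$$
   Context: Stochastic bandit with $K$ arms; arm $k$ has i.i.d. rewards $X_k(t)\in[0,1]$ with mean $\mu_k$, independent across arms. A policy selects $k(n)$ based only on past selections and observed rewards. $t_k(n)=\sum_{t\le n}\mathbf 1\{k(t)=k\}$ and $\hat\mu_k(n)=\frac1{t_k(n)}\sum_{t\le n}\mathbf 1\{k(t)=k\}X_k(t)$ (empirical mean of arm $k$). $\mathcal F_n$ is the $\sigma$-algebra generated by $(X_j(t))_{1\le t\le n,\,1\le j\le K}$ (together with the policy's choices up to $n$). *)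

theory Defs
  imports "HOL-Probability.Probability"
begin

definition tk :: "(nat \<Rightarrow> 'a \<Rightarrow> nat) \<Rightarrow> nat \<Rightarrow> nat \<Rightarrow> 'a \<Rightarrow> nat" where
  "tk sel k n \<omega> = card {t \<in> {1..n}. sel t \<omega> = k}"

text \<open>Empirical mean of arm k at time n (the value for tk = 0 is irrelevant).\<close>
definition muhat :: "(nat \<Rightarrow> nat \<Rightarrow> 'a \<Rightarrow> real) \<Rightarrow> (nat \<Rightarrow> 'a \<Rightarrow> nat) \<Rightarrow> nat \<Rightarrow> nat \<Rightarrow> 'a \<Rightarrow> real" where
  "muhat X sel k n \<omega> =
     (\<Sum>t\<in>{1..n}. if sel t \<omega> = k then X k t \<omega> else 0) / real (tk sel k n \<omega>)"

text \<open>Sigma-algebra of the history strictly before time n: past selections and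
  the rewards observed (those of the selected arms).\<close>
definition hist_sigma :: "'a measure \<Rightarrow> (nat \<Rightarrow> nat \<Rightarrow> 'a \<Rightarrow> real) \<Rightarrow> (nat \<Rightarrow> 'a \<Rightarrow> nat) \<Rightarrow> nat \<Rightarrow> 'a measure" where
  "hist_sigma M X sel n = sigma (space M)
     {(\<lambda>\<omega>. (sel t \<omega>, X (sel t \<omega>) t \<omega>)) -` A \<inter> space M | t A.
        t \<in> {1..<n} \<and> A \<in> sets (count_space UNIV \<Otimes>\<^sub>M borel)}"

definition Fsig :: "'a measure \<Rightarrow> nat \<Rightarrow> (nat \<Rightarrow> nat \<Rightarrow> 'a \<Rightarrow> real) \<Rightarrow> (nat \<Rightarrow> 'a \<Rightarrow> nat) \<Rightarrow> nat \<Rightarrow> 'a measure" where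
  "Fsig M K X sel n = sigma (space M)
     ({X j t -` B \<inter> space M | j t B. j \<in> {1..K} \<and> t \<in> {1..n} \<and> B \<in> sets borel}
      \<union> {sel t -` A \<inter> space M | t A. t \<in> {1..n}})"

end

theory Submission
  imports Defs
begin

(* For a real parameter l, the process
     Z_l(N) = exp (sum over pulls t <= N of arm k of  l (X_k(t) - mu_k) - l^2/8)
   is a nonnegative supermartingale with Z_l(0) = 1 with respect to the filtration generated
   by all rewards up to time N: the policy is predictable for this filtration, the next reward
   of arm k is independent of it, and Hoeffding's lemma bounds its exponential moment.
   Since each Lam(s) contains at most one instant and is adapted, optional stopping yields
   E[sum_n Z_l(n) 1{n in Lam(s)}] <= 1.  If n in Lam(s) and |muhat_k(n) - mu_k| > delta, then
   t_k(n) >= eps s forces Z_{4 delta}(n) + Z_{-4 delta}(n) >= exp(2 eps delta^2 s).  Weighting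
   level s by exp(-2 eps delta^2 s) and summing the geometric series gives
   2 / (2 eps delta^2) = 1 / (eps delta^2). *)

text \<open>Proof: the process
  \<open>Y\<close> stopped at the first event is again a supermartingale.\<close>
lemma (in prob_space) supermartingale_disjoint_events_finite:
  fixes Y :: "nat \<Rightarrow> 'a \<Rightarrow> real" and F :: "nat \<Rightarrow> 'a measure" and S :: "nat \<Rightarrow> 'a set"
  assumes F: "filtration (space M) F" and F_sub: "\<And>n. sets (F n) \<subseteq> sets M"
    and Y_int: "\<And>n. integrable M (Y n)"
    and Y_nonneg: "\<And>n \<omega>. \<omega> \<in> space M \<Longrightarrow> 0 \<le> Y n \<omega>"
    and Y_0: "\<And>\<omega>. \<omega> \<in> space M \<Longrightarrow> Y 0 \<omega> = 1"
    and super: "\<And>n A. A \<in> sets (F n) \<Longrightarrow>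
                  (\<integral>\<omega>. Y (Suc n) \<omega> * indicator A \<omega> \<partial>M) \<le> (\<integral>\<omega>. Y n \<omega> * indicator A \<omega> \<partial>M)"
    and S: "\<And>n. S n \<in> sets (F n)" and disj: "disjoint_family S"
  shows "(\<integral>\<omega>. (\<Sum>n<N. Y n \<omega> * indicator (S n) \<omega>) \<partial>M) \<le> 1"
proof -
  interpret F: filtration "space M" F by (rule F)
  define D where "D N = space M - (\<Union>n<N. S n)" for N
  have D_F: "D (Suc N) \<in> sets (F N)" for N
  proof -
    have "S n \<in> sets (F N)" if "n < Suc N" for n
      using S[of n] F.sets_F_mono[of n N] that by auto
    then have "space (F N) - (\<Union>n<Suc N. S n) \<in> sets (F N)" by auto
    then show ?thesis by (simp add: D_def F.space_F)
  qed
  have SM: "S n \<in> sets M" for n using S F_sub by blast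
  have DM: "D N \<in> sets M" for N unfolding D_def using SM by auto
  define W where "W N \<omega> = (\<Sum>n<N. Y n \<omega> * indicator (S n) \<omega>) + Y N \<omega> * indicator (D N) \<omega>" for N \<omega>
  have iS: "integrable M (\<lambda>\<omega>. \<Sum>n<N. Y n \<omega> * indicator (S n) \<omega>)" for N
    using SM Y_int by (intro Bochner_Integration.integrable_sum integrable_real_mult_indicator)
  have iD: "integrable M (\<lambda>\<omega>. Y n \<omega> * indicator (D N) \<omega>)" for n N
    using DM Y_int by (rule integrable_real_mult_indicator)
  have iW: "integrable M (W N)" for N
    unfolding W_def using iS iD by (rule Bochner_Integration.integrable_add)
  text \<open>The process \<open>W\<close> (\<open>Y\<close> stopped at the first event) increases by
    \<open>(Y (N+1) - Y N) \<cdot> 1[D (N+1)]\<close>, which has nonpositive mean.\<close>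
  have W_Suc: "W (Suc N) \<omega> = W N \<omega> + (Y (Suc N) \<omega> * indicator (D (Suc N)) \<omega> - Y N \<omega> * indicator (D (Suc N)) \<omega>)"
    if "\<omega> \<in> space M" for N \<omega>
  proof -
    have "indicator (D N) \<omega> = indicator (D (Suc N)) \<omega> + (indicator (S N) \<omega> :: real)"
      using that disj unfolding D_def disjoint_family_on_def
      by (auto simp: indicator_def lessThan_Suc) (metis IntI empty_iff less_irrefl)
    then show ?thesis unfolding W_def by (simp add: algebra_simps)
  qed
  have W_le: "(\<integral>\<omega>. W N \<omega> \<partial>M) \<le> 1" for N
  proof (induction N)
    case 0
    have "(\<integral>\<omega>. W 0 \<omega> \<partial>M) = (\<integral>\<omega>. 1 \<partial>M)"
      by (rule Bochner_Integration.integral_cong) (simp_all add: W_def D_def Y_0)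
    then show ?case by (simp add: prob_space)
  next
    case (Suc N)
    have "(\<integral>\<omega>. W (Suc N) \<omega> \<partial>M)
        = (\<integral>\<omega>. W N \<omega> \<partial>M) + ((\<integral>\<omega>. Y (Suc N) \<omega> * indicator (D (Suc N)) \<omega> \<partial>M)
            - (\<integral>\<omega>. Y N \<omega> * indicator (D (Suc N)) \<omega> \<partial>M))"
      by (simp add: Bochner_Integration.integral_cong[OF refl W_Suc] iW iD)
    also have "\<dots> \<le> (\<integral>\<omega>. W N \<omega> \<partial>M)" using super[OF D_F] by simp
    finally show ?case using Suc.IH by simp
  qed
  have "(\<integral>\<omega>. (\<Sum>n<N. Y n \<omega> * indicator (S n) \<omega>) \<partial>M) \<le> (\<integral>\<omega>. W N \<omega> \<partial>M)"
    using iS iW by (rule integral_mono) (simp add: W_def Y_nonneg)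
  then show ?thesis using W_le[of N] by linarith
qed

lemma (in prob_space) supermartingale_disjoint_events:
  fixes Y :: "nat \<Rightarrow> 'a \<Rightarrow> real" and F :: "nat \<Rightarrow> 'a measure" and S :: "nat \<Rightarrow> 'a set"
  assumes F: "filtration (space M) F" and F_sub: "\<And>n. sets (F n) \<subseteq> sets M"
    and Y_int: "\<And>n. integrable M (Y n)"
    and Y_nonneg: "\<And>n \<omega>. \<omega> \<in> space M \<Longrightarrow> 0 \<le> Y n \<omega>"
    and Y_0: "\<And>\<omega>. \<omega> \<in> space M \<Longrightarrow> Y 0 \<omega> = 1"
    and super: "\<And>n A. A \<in> sets (F n) \<Longrightarrow>
                  (\<integral>\<omega>. Y (Suc n) \<omega> * indicator A \<omega> \<partial>M) \<le> (\<integral>\<omega>. Y n \<omega> * indicator A \<omega> \<partial>M)"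
    and S: "\<And>n. S n \<in> sets (F n)" and disj: "disjoint_family S"
  shows "(\<integral>\<^sup>+\<omega>. (\<Sum>n. ennreal (Y n \<omega> * indicator (S n) \<omega>)) \<partial>M) \<le> 1"
proof -
  have SM: "S n \<in> sets M" for n using S F_sub by blast
  have meas: "(\<lambda>\<omega>. ennreal (Y n \<omega> * indicator (S n) \<omega>)) \<in> borel_measurable M" for n
    using borel_measurable_integrable[OF Y_int] SM by measurable
  have "(\<Sum>n<N. \<integral>\<^sup>+\<omega>. ennreal (Y n \<omega> * indicator (S n) \<omega>) \<partial>M) \<le> 1" for N
  proof -
    have "(\<Sum>n<N. \<integral>\<^sup>+\<omega>. ennreal (Y n \<omega> * indicator (S n) \<omega>) \<partial>M)
        = (\<integral>\<^sup>+\<omega>. ennreal (\<Sum>n<N. Y n \<omega> * indicator (S n) \<omega>) \<partial>M)"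
      using meas Y_nonneg
      by (subst nn_integral_sum[symmetric]) (auto intro!: nn_integral_cong simp: sum_ennreal)
    also have "\<dots> = ennreal (\<integral>\<omega>. (\<Sum>n<N. Y n \<omega> * indicator (S n) \<omega>) \<partial>M)"
      using SM Y_int Y_nonneg
      by (intro nn_integral_eq_integral Bochner_Integration.integrable_sum
            integrable_real_mult_indicator AE_I2 sum_nonneg) auto
    also have "\<dots> \<le> 1"
      using supermartingale_disjoint_events_finite[OF assms] by simp
    finally show ?thesis .
  qed
  then have "(\<Sum>n. \<integral>\<^sup>+\<omega>. ennreal (Y n \<omega> * indicator (S n) \<omega>) \<partial>M) \<le> 1"
    by (intro suminf_le_const summableI)
  then show ?thesis using nn_integral_suminf[OF meas] by simp
qed

lemma suminf_le_double_suminf: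
  fixes a :: "nat \<Rightarrow> ennreal" and b :: "nat \<Rightarrow> nat \<Rightarrow> ennreal"
  assumes "\<And>n. a n \<le> (\<Sum>s. b s n)"
  shows "(\<Sum>n. a n) \<le> (\<Sum>s. \<Sum>n. b s n)"
proof (rule suminf_le_const[OF summableI])
  fix N
  have "(\<Sum>n<N. a n) \<le> (\<Sum>n<N. \<Sum>s. b s n)" by (rule sum_mono) (rule assms)
  also have "\<dots> = (\<Sum>s. \<Sum>n<N. b s n)" by (rule suminf_sum[symmetric]) (rule summableI)
  also have "\<dots> \<le> (\<Sum>s. \<Sum>n. b s n)"
    by (intro suminf_le summableI sum_le_suminf) auto
  finally show "(\<Sum>n<N. a n) \<le> (\<Sum>s. \<Sum>n. b s n)" .
qed

lemma geometric_tail_le: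
  fixes a :: real
  assumes a: "a > 0"
  shows "(\<Sum>s. ennreal (exp (- a) ^ Suc s)) \<le> ennreal (1 / a)"
proof -
  define q where "q = exp (- a)"
  have q: "0 < q" "q < 1" unfolding q_def using a by auto
  have "(\<lambda>s. q * q ^ s) sums (q * (1 / (1 - q)))"
    by (intro sums_mult geometric_sums) (use q in simp)
  then have sums: "(\<lambda>s. q ^ Suc s) sums (q / (1 - q))" by simp
  have "q * (1 + a) \<le> q * exp a" using q exp_ge_add_one_self[of a] by simp
  also have "q * exp a = 1" unfolding q_def by (simp add: exp_minus field_simps)
  finally have "q / (1 - q) \<le> 1 / a" using q a by (simp add: field_simps)
  moreover have "(\<Sum>s. ennreal (q ^ Suc s)) = ennreal (q / (1 - q))"
    using sums q by (simp add: suminf_ennreal2 sums_summable sums_unique[symmetric])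
  ultimately show ?thesis unfolding q_def by (simp add: ennreal_leI)
qed

lemma (in prob_space) bounded_integrable:
  fixes f :: "'a \<Rightarrow> real"
  assumes "f \<in> borel_measurable M" and "\<And>\<omega>. \<omega> \<in> space M \<Longrightarrow> \<bar>f \<omega>\<bar> \<le> B"
  shows "integrable M f"
  using assms by (intro integrable_const_bound[where B = B] AE_I2) auto

lemma exponential_deviation_witness:
  fixes t eps delta x m :: real and s :: nat
  assumes t: "t > 0" and ts: "t \<ge> eps * real s" and d: "delta > 0" and dev: "\<bar>x / t - m\<bar> > delta"
  shows "1 \<le> exp (- (2 * eps * delta\<^sup>2)) ^ s *
     (exp ((4 * delta) * (x - t * m) - t * (4 * delta)\<^sup>2 / 8)
      + exp ((- 4 * delta) * (x - t * m) - t * (- 4 * delta)\<^sup>2 / 8))"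
proof -
  define c where "c = 2 * eps * delta\<^sup>2 * real s"
  define E1 where "E1 = (4 * delta) * (x - t * m) - t * (4 * delta)\<^sup>2 / 8"
  define E2 where "E2 = (- 4 * delta) * (x - t * m) - t * (- 4 * delta)\<^sup>2 / 8"
  have q: "exp (- (2 * eps * delta\<^sup>2)) ^ s = exp (- c)"
    unfolding c_def using exp_of_nat_mult[of s "- (2 * eps * delta\<^sup>2)"] by (simp add: algebra_simps)
  have c_le: "c \<le> 2 * delta\<^sup>2 * t"
    unfolding c_def using mult_left_mono[OF ts, of "2 * delta\<^sup>2"] by (simp add: algebra_simps)
  have "t * delta < \<bar>x - t * m\<bar>"
  proof -
    have "x / t - m = (x - t * m) / t" using t by (simp add: field_simps)
    then have "delta < \<bar>x - t * m\<bar> / t" using dev t by (simp add: abs_divide)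
    then show ?thesis using t by (simp add: pos_less_divide_eq mult.commute)
  qed
  then have "4 * delta * (t * delta) \<le> 4 * delta * \<bar>x - t * m\<bar>" using d by simp
  then have "2 * delta\<^sup>2 * t \<le> E1 \<or> 2 * delta\<^sup>2 * t \<le> E2"
    unfolding E1_def E2_def by (cases "x - t * m \<ge> 0") (simp_all add: power2_eq_square algebra_simps)
  then have "exp c \<le> exp E1 + exp E2"
    using c_le by (smt (verit) exp_gt_zero exp_le_cancel_iff)
  then have "exp (- c) * exp c \<le> exp (- c) * (exp E1 + exp E2)" by simp
  moreover have "exp (- c) * exp c = 1" using exp_minus_inverse[of c] by (simp add: mult.commute)
  ultimately show ?thesis unfolding q E1_def[symmetric] E2_def[symmetric] by simp
qed

locale bandit = prob_space M for M :: "'a measure" +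
  fixes K :: nat and X :: "nat \<Rightarrow> nat \<Rightarrow> 'a \<Rightarrow> real" and mu :: "nat \<Rightarrow> real"
    and sel :: "nat \<Rightarrow> 'a \<Rightarrow> nat" and k :: nat
  assumes X_rv: "\<And>j t. j \<in> {1..K} \<Longrightarrow> t \<ge> 1 \<Longrightarrow> X j t \<in> borel_measurable M"
    and X_range: "\<And>j t \<omega>. j \<in> {1..K} \<Longrightarrow> t \<ge> 1 \<Longrightarrow> \<omega> \<in> space M \<Longrightarrow> X j t \<omega> \<in> {0..1}"
    and X_indep: "indep_vars (\<lambda>_. borel) (\<lambda>(j, t). X j t) ({1..K} \<times> {1..})"
    and X_ident: "\<And>j t. j \<in> {1..K} \<Longrightarrow> t \<ge> 1 \<Longrightarrow> distr M borel (X j t) = distr M borel (X j 1)"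
    and X_mean: "\<And>j. j \<in> {1..K} \<Longrightarrow> expectation (X j 1) = mu j"
    and sel_range: "\<And>n \<omega>. n \<ge> 1 \<Longrightarrow> \<omega> \<in> space M \<Longrightarrow> sel n \<omega> \<in> {1..K}"
    and sel_policy: "\<And>n. n \<ge> 1 \<Longrightarrow> sel n \<in> measurable (hist_sigma M X sel n) (count_space UNIV)"
    and k: "k \<in> {1..K}"
begin

definition reward_events :: "nat \<Rightarrow> 'a set set" where
  "reward_events N = {X j t -` B \<inter> space M | j t B. j \<in> {1..K} \<and> t \<in> {1..N} \<and> B \<in> sets borel}"

definition reward_sigma :: "nat \<Rightarrow> 'a measure" where
  "reward_sigma N = sigma (space M) (reward_events N)"

lemma reward_events_Pow: "reward_events N \<subseteq> Pow (space M)"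
  unfolding reward_events_def by auto

lemma space_reward_sigma [simp]: "space (reward_sigma N) = space M"
  unfolding reward_sigma_def using reward_events_Pow by simp

lemma sets_reward_sigma: "sets (reward_sigma N) = sigma_sets (space M) (reward_events N)"
  unfolding reward_sigma_def using reward_events_Pow by (simp add: sets_measure_of)

lemma reward_sigma_sub: "sets (reward_sigma N) \<subseteq> sets M"
proof -
  have "reward_events N \<subseteq> sets M"
    unfolding reward_events_def using X_rv by (auto intro!: measurable_sets)
  then show ?thesis unfolding sets_reward_sigma by (rule sets.sigma_sets_subset)
qed

lemma reward_sigma_subalgebra: "subalgebra M (reward_sigma N)"
  unfolding subalgebra_def using reward_sigma_sub by simp

lemma reward_sigma_mono: "N \<le> N' \<Longrightarrow> sets (reward_sigma N) \<subseteq> sets (reward_sigma N')"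
  unfolding sets_reward_sigma reward_events_def
  by (rule sigma_sets_mono) (fastforce intro: sigma_sets.Basic)

lemma reward_sigma_subalgebra_mono: "N \<le> N' \<Longrightarrow> subalgebra (reward_sigma N') (reward_sigma N)"
  unfolding subalgebra_def using reward_sigma_mono by simp

lemma reward_filtration: "filtration (space M) reward_sigma"
  by unfold_locales (simp_all add: reward_sigma_mono)

lemma X_reward_sigma: "j \<in> {1..K} \<Longrightarrow> t \<in> {1..N} \<Longrightarrow> X j t \<in> borel_measurable (reward_sigma N)"
proof (rule measurableI)
  fix B :: "real set" assume "j \<in> {1..K}" "t \<in> {1..N}" "B \<in> sets borel"
  then have "X j t -` B \<inter> space M \<in> reward_events N" unfolding reward_events_def by blast
  then show "X j t -` B \<inter> space (reward_sigma N) \<in> sets (reward_sigma N)"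
    unfolding sets_reward_sigma by auto
qed auto

text \<open>The policy is predictable: the choice at time \<open>n\<close> is determined by the rewards before
  \<open>n\<close>.  By strong induction, all earlier choices, hence the whole observed history, are.\<close>
lemma sel_predictable: "n \<ge> 1 \<Longrightarrow> sel n \<in> measurable (reward_sigma (n - 1)) (count_space UNIV)"
proof (induction n rule: less_induct)
  case (less n)
  let ?H = "{(\<lambda>\<omega>. (sel t \<omega>, X (sel t \<omega>) t \<omega>)) -` A \<inter> space M | t A.
      t \<in> {1..<n} \<and> A \<in> sets (count_space UNIV \<Otimes>\<^sub>M borel)}"
  have "?H \<subseteq> sets (reward_sigma (n - 1))"
  proof
    fix S assume "S \<in> ?H"
    then obtain t A where S: "S = (\<lambda>\<omega>. (sel t \<omega>, X (sel t \<omega>) t \<omega>)) -` A \<inter> space M"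
      and t: "t \<in> {1..<n}" and A: "A \<in> sets (count_space UNIV \<Otimes>\<^sub>M borel)" by blast
    have sel_t: "sel t \<in> measurable (reward_sigma (n - 1)) (count_space UNIV)"
      by (rule measurable_from_subalg[OF reward_sigma_subalgebra_mono[of "t - 1"]])
         (use t less.IH[of t] in auto)
    then have "sel t \<in> measurable (reward_sigma (n - 1)) (count_space {1..K})"
      using sel_range t measurable_sets[OF sel_t]
      by (auto simp: measurable_count_space_eq2[OF finite_atLeastAtMost])
    then have "(\<lambda>\<omega>. X (sel t \<omega>) t \<omega>) \<in> borel_measurable (reward_sigma (n - 1))"
      by (rule measurable_compose_countable'[rotated]) (use t in \<open>auto intro!: X_reward_sigma\<close>)
    then have "(\<lambda>\<omega>. (sel t \<omega>, X (sel t \<omega>) t \<omega>))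
        \<in> measurable (reward_sigma (n - 1)) (count_space UNIV \<Otimes>\<^sub>M borel)"
      using sel_t by (intro measurable_Pair) auto
    from measurable_sets[OF this A] show "S \<in> sets (reward_sigma (n - 1))" using S by simp
  qed
  then have "sets (hist_sigma M X sel n) \<subseteq> sets (reward_sigma (n - 1))"
    unfolding hist_sigma_def using sets.top[of "reward_sigma (n - 1)"]
    by (subst sigma_le_sets) auto
  then show ?case
    by (intro measurable_from_subalg[OF _ sel_policy[OF less.prems]])
       (simp add: subalgebra_def hist_sigma_def space_measure_of_conv)
qed

lemma sel_reward_sigma: "t \<in> {1..N} \<Longrightarrow> sel t \<in> measurable (reward_sigma N) (count_space UNIV)"
  by (rule measurable_from_subalg[OF reward_sigma_subalgebra_mono[of "t - 1" N]])
     (use sel_predictable[of t] in auto)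

lemma Fsig_subset_reward_sigma: "sets (Fsig M K X sel n) \<subseteq> sets (reward_sigma n)"
proof -
  let ?F = "{X j t -` B \<inter> space M | j t B. j \<in> {1..K} \<and> t \<in> {1..n} \<and> B \<in> sets borel}
      \<union> {sel t -` A \<inter> space M | t A. t \<in> {1..n}}"
  have "?F \<subseteq> sets (reward_sigma n)"
  proof
    fix S assume "S \<in> ?F"
    then consider "S \<in> reward_events n" | t A where "S = sel t -` A \<inter> space M" "t \<in> {1..n}"
      unfolding reward_events_def by blast
    then show "S \<in> sets (reward_sigma n)"
    proof cases
      case 1 then show ?thesis unfolding sets_reward_sigma by auto
    next
      case 2 then show ?thesis using measurable_sets[OF sel_reward_sigma[OF 2(2)], of A] by simp
    qed
  qed
  then show ?thesis
    unfolding Fsig_def using sets.top[of "reward_sigma n"] by (subst sigma_le_sets) auto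
qed

definition Z :: "real \<Rightarrow> nat \<Rightarrow> 'a \<Rightarrow> real" where
  "Z l N \<omega> = exp (\<Sum>t\<in>{1..N}. if sel t \<omega> = k then l * (X k t \<omega> - mu k) - l\<^sup>2 / 8 else 0)"

lemma Z_0: "Z l 0 \<omega> = 1"
  unfolding Z_def by simp

lemma Z_pos: "Z l N \<omega> > 0"
  unfolding Z_def by simp

lemma Z_Suc: "Z l (Suc N) \<omega> = Z l N \<omega> *
   (if sel (Suc N) \<omega> = k then exp (l * (X k (Suc N) \<omega> - mu k) - l\<^sup>2 / 8) else 1)"
proof -
  have "{1..Suc N} = insert (Suc N) {1..N}" by auto
  then show ?thesis unfolding Z_def by (simp add: exp_add)
qed

lemma Z_expand: "Z l n \<omega> = exp (l * ((\<Sum>t\<in>{1..n}. if sel t \<omega> = k then X k t \<omega> else 0)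
    - real (tk sel k n \<omega>) * mu k) - real (tk sel k n \<omega>) * l\<^sup>2 / 8)"
proof -
  let ?B = "{t \<in> {1..n}. sel t \<omega> = k}"
  have "(\<Sum>t\<in>{1..n}. if sel t \<omega> = k then l * (X k t \<omega> - mu k) - l\<^sup>2 / 8 else 0)
      = (\<Sum>t\<in>?B. l * (X k t \<omega> - mu k) - l\<^sup>2 / 8)"
    by (rule sum.inter_filter[symmetric]) simp
  also have "\<dots> = l * (\<Sum>t\<in>?B. X k t \<omega>) - real (card ?B) * (l * mu k) - real (card ?B) * (l\<^sup>2 / 8)"
    by (simp add: sum_subtractf sum_distrib_left right_diff_distrib)
  also have "(\<Sum>t\<in>?B. X k t \<omega>) = (\<Sum>t\<in>{1..n}. if sel t \<omega> = k then X k t \<omega> else 0)"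
    by (rule sum.inter_filter) simp
  finally show ?thesis unfolding Z_def tk_def by (simp add: algebra_simps)
qed

lemma Z_reward_sigma: "Z l N \<in> borel_measurable (reward_sigma N)"
  unfolding Z_def
proof (intro measurable_compose[OF _ borel_measurable_exp] borel_measurable_sum)
  fix t assume t: "t \<in> {1..N}"
  have "{\<omega> \<in> space (reward_sigma N). sel t \<omega> = k} = sel t -` {k} \<inter> space (reward_sigma N)" by auto
  then have "{\<omega> \<in> space (reward_sigma N). sel t \<omega> = k} \<in> sets (reward_sigma N)"
    using measurable_sets[OF sel_reward_sigma[OF t]] by simp
  then show "(\<lambda>\<omega>. if sel t \<omega> = k then l * (X k t \<omega> - mu k) - l\<^sup>2 / 8 else 0)
      \<in> borel_measurable (reward_sigma N)"
    using X_reward_sigma[OF k t] by (intro measurable_If) auto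
qed

lemma Z_measurable: "Z l N \<in> borel_measurable M"
  by (rule measurable_from_subalg[OF reward_sigma_subalgebra Z_reward_sigma])

lemma increment_bound:
  "t \<ge> 1 \<Longrightarrow> \<omega> \<in> space M \<Longrightarrow> l * (X k t \<omega> - mu k) - l\<^sup>2 / 8 \<le> \<bar>l\<bar> * (1 + \<bar>mu k\<bar>)"
proof -
  assume "t \<ge> 1" "\<omega> \<in> space M"
  then have x: "X k t \<omega> \<in> {0..1}" using X_range k by auto
  have "l * (X k t \<omega> - mu k) \<le> \<bar>l\<bar> * \<bar>X k t \<omega> - mu k\<bar>" by (simp add: abs_mult[symmetric])
  also have "\<dots> \<le> \<bar>l\<bar> * (1 + \<bar>mu k\<bar>)" using x by (intro mult_left_mono) auto
  finally show ?thesis using zero_le_power2[of l] by linarith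
qed

lemma Z_integrable: "integrable M (Z l N)"
proof (rule bounded_integrable[OF Z_measurable])
  fix \<omega> assume \<omega>: "\<omega> \<in> space M"
  have "(\<Sum>t\<in>{1..N}. if sel t \<omega> = k then l * (X k t \<omega> - mu k) - l\<^sup>2 / 8 else 0)
      \<le> (\<Sum>t\<in>{1..N}. \<bar>l\<bar> * (1 + \<bar>mu k\<bar>))"
    using increment_bound[OF _ \<omega>] by (intro sum_mono) (auto intro: mult_nonneg_nonneg)
  then show "\<bar>Z l N \<omega>\<bar> \<le> exp (real N * (\<bar>l\<bar> * (1 + \<bar>mu k\<bar>)))"
    unfolding Z_def by simp
qed

lemma reward_sigma_indep_next:
  "indep_set (sets (reward_sigma N))
     (sigma_sets (space M) {X k (Suc N) -` A \<inter> space M | A. A \<in> sets borel})"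
proof -
  define E where "E = (\<lambda>i. {(\<lambda>(j, t). X j t) i -` A \<inter> space M | A. A \<in> sets (borel :: real measure)})"
  define I where "I = (\<lambda>b::bool. if b then {1..K} \<times> {1..N} else {(k, Suc N)})"
  have "indep_sets E ({1..K} \<times> {1..})"
    using X_indep unfolding indep_vars_def2 E_def by blast
  then have "indep_sets E (\<Union>b. I b)"
    by (rule indep_sets_mono_index[rotated]) (use k in \<open>auto simp: I_def\<close>)
  moreover have "Int_stable (E i)" for i
  proof (rule Int_stableI)
    fix a b assume "a \<in> E i" "b \<in> E i"
    then obtain A B where "a = (\<lambda>(j, t). X j t) i -` A \<inter> space M" "A \<in> sets borel"
        "b = (\<lambda>(j, t). X j t) i -` B \<inter> space M" "B \<in> sets borel" unfolding E_def by blast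
    then show "a \<inter> b \<in> E i" unfolding E_def by (intro CollectI exI[of _ "A \<inter> B"]) auto
  qed
  moreover have "disjoint_family_on I UNIV"
    unfolding disjoint_family_on_def I_def by auto
  ultimately have ind: "indep_sets (\<lambda>b. sigma_sets (space M) (\<Union>i\<in>I b. E i)) UNIV"
    by (rule indep_sets_collect_sigma)
  have "(\<Union>i\<in>I True. E i) = reward_events N"
    unfolding I_def E_def reward_events_def by (auto 4 4)
  moreover have "(\<Union>i\<in>I False. E i) = {X k (Suc N) -` A \<inter> space M | A. A \<in> sets borel}"
    unfolding I_def E_def by simp
  ultimately have "(\<lambda>b. sigma_sets (space M) (\<Union>i\<in>I b. E i)) =
      case_bool (sets (reward_sigma N)) (sigma_sets (space M) {X k (Suc N) -` A \<inter> space M | A. A \<in> sets borel})"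
    by (intro ext) (simp add: sets_reward_sigma split: bool.split)
  with ind show ?thesis unfolding indep_set_def by simp
qed

lemma indep_var_next_reward:
  assumes F: "F \<in> borel_measurable (reward_sigma N)" and h: "(h :: real \<Rightarrow> real) \<in> borel_measurable borel"
  shows "indep_var borel F borel (\<lambda>\<omega>. h (X k (Suc N) \<omega>))"
proof -
  have XS: "X k (Suc N) \<in> borel_measurable M" using X_rv[OF k] by auto
  let ?Y = "sigma_sets (space M) {X k (Suc N) -` A \<inter> space M | A. A \<in> sets borel}"
  let ?SA = "sigma_sets (space M) {F -` A \<inter> space M | A. A \<in> sets (borel :: real measure)}"
  let ?SB = "sigma_sets (space M) {(\<lambda>\<omega>. h (X k (Suc N) \<omega>)) -` A \<inter> space M | A. A \<in> sets (borel :: real measure)}"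
  have "{F -` A \<inter> space M | A. A \<in> sets (borel :: real measure)} \<subseteq> sets (reward_sigma N)"
    using measurable_sets[OF F] by auto
  then have "?SA \<subseteq> sets (reward_sigma N)"
    using sets.sigma_sets_subset[of _ "reward_sigma N"] by simp
  moreover have "?SB \<subseteq> ?Y"
  proof (rule sigma_sets_mono, safe)
    fix A :: "real set" assume "A \<in> sets borel"
    then have "h -` A \<inter> space borel \<in> sets borel" using measurable_sets[OF h] by blast
    moreover have "(\<lambda>\<omega>. h (X k (Suc N) \<omega>)) -` A \<inter> space M = X k (Suc N) -` (h -` A \<inter> space borel) \<inter> space M"
      by auto
    ultimately show "(\<lambda>\<omega>. h (X k (Suc N) \<omega>)) -` A \<inter> space M \<in> ?Y" by blast
  qed
  ultimately have "indep_set ?SA ?SB"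
    using reward_sigma_indep_next[of N] unfolding indep_sets2_eq by blast
  moreover have "random_variable borel F"
    by (rule measurable_from_subalg[OF reward_sigma_subalgebra F])
  moreover have "random_variable borel (\<lambda>\<omega>. h (X k (Suc N) \<omega>))"
    using measurable_compose[OF XS h] by (simp add: comp_def)
  ultimately show ?thesis unfolding indep_var_eq by blast
qed

lemma expectation_X: "t \<ge> 1 \<Longrightarrow> expectation (X k t) = mu k"
proof -
  assume t: "t \<ge> 1"
  have m: "X k t \<in> borel_measurable M" "X k 1 \<in> borel_measurable M" using X_rv k t by auto
  have "expectation (X k t) = integral\<^sup>L (distr M borel (X k t)) (\<lambda>x. x)"
    by (rule integral_distr[symmetric, OF m(1)]) simp
  also have "\<dots> = integral\<^sup>L (distr M borel (X k 1)) (\<lambda>x. x)" using X_ident[OF k t] by simp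
  also have "\<dots> = expectation (X k 1)" by (rule integral_distr[OF m(2)]) simp
  finally show ?thesis using X_mean[OF k] by simp
qed

lemma hoeffding_increment:
  assumes t: "t \<ge> 1"
  shows "expectation (\<lambda>\<omega>. exp (l * (X k t \<omega> - mu k) - l\<^sup>2 / 8)) \<le> 1"
proof -
  have m: "X k t \<in> borel_measurable M" using X_rv k t by auto
  have rng: "\<And>\<omega>. \<omega> \<in> space M \<Longrightarrow> X k t \<omega> \<in> {0..1}" using X_range k t by auto
  have meas: "(\<lambda>\<omega>. exp (l * (X k t \<omega> - mu k))) \<in> borel_measurable M" using m by measurable
  have conv: "expectation (\<lambda>\<omega>. exp (l * (X k t \<omega> - mu k))) =
      enn2real (\<integral>\<^sup>+\<omega>. ennreal (exp (l * (X k t \<omega> - mu k))) \<partial>M)"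
    by (rule integral_eq_nn_integral[OF meas]) auto
  have "expectation (\<lambda>\<omega>. exp (l * (X k t \<omega> - mu k))) \<le> exp (l\<^sup>2 / 8)"
  proof (cases l "0 :: real" rule: linorder_cases)
    case greater
    interpret I: interval_bounded_random_variable M "X k t" 0 1
      by unfold_locales (use m rng in \<open>auto intro!: AE_I2\<close>)
    have "(\<integral>\<^sup>+\<omega>. ennreal (exp (l * (X k t \<omega> - mu k))) \<partial>M) \<le> ennreal (exp (l\<^sup>2 * (1 - 0)\<^sup>2 / 8))"
      using I.Hoeffdings_lemma_nn_integral[OF greater] expectation_X[OF t] by simp
    then show ?thesis unfolding conv by (intro enn2real_leI) auto
  next
    case less
    interpret I: interval_bounded_random_variable M "\<lambda>\<omega>. - X k t \<omega>" "-1" 0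
      by unfold_locales (use m rng in \<open>auto intro!: AE_I2\<close>)
    have e: "expectation (\<lambda>\<omega>. - X k t \<omega>) = - mu k" using expectation_X[OF t] by simp
    have "(\<integral>\<^sup>+\<omega>. ennreal (exp ((-l) * (- X k t \<omega> - expectation (\<lambda>\<omega>. - X k t \<omega>)))) \<partial>M)
        \<le> ennreal (exp ((-l)\<^sup>2 * (0 - (-1))\<^sup>2 / 8))"
      using I.Hoeffdings_lemma_nn_integral[of "-l"] less by simp
    then have "(\<integral>\<^sup>+\<omega>. ennreal (exp (l * (X k t \<omega> - mu k))) \<partial>M) \<le> ennreal (exp (l\<^sup>2 / 8))"
      unfolding e by (simp add: algebra_simps)
    then show ?thesis unfolding conv by (intro enn2real_leI) auto
  qed (simp add: prob_space)
  then show ?thesis by (simp add: exp_diff)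
qed

text \<open>Supermartingale property of \<open>Z l\<close> with respect to the reward filtration: on the event
  that arm \<open>k\<close> is pulled at \<open>N+1\<close> (known at time \<open>N\<close>), \<open>Z\<close> is multiplied by a factor that is
  independent of the past and has mean at most one; otherwise it is unchanged.\<close>
lemma Z_supermartingale:
  assumes A: "A \<in> sets (reward_sigma N)"
  shows "(\<integral>\<omega>. Z l (Suc N) \<omega> * indicator A \<omega> \<partial>M) \<le> (\<integral>\<omega>. Z l N \<omega> * indicator A \<omega> \<partial>M)"
proof -
  define B where "B = {\<omega> \<in> space M. sel (Suc N) \<omega> = k}"
  have "B = sel (Suc N) -` {k} \<inter> space (reward_sigma N)" unfolding B_def by auto
  then have B: "B \<in> sets (reward_sigma N)"
    using measurable_sets[OF sel_predictable[of "Suc N"], of "{k}"] by simp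
  have AB: "A - B \<in> sets M" "A \<inter> B \<in> sets M" using A B reward_sigma_sub by auto
  define h where "h = (\<lambda>x::real. exp (l * (x - mu k) - l\<^sup>2 / 8))"
  define F1 where "F1 = (\<lambda>\<omega>. Z l N \<omega> * indicator (A - B) \<omega>)"
  define F2 where "F2 = (\<lambda>\<omega>. Z l N \<omega> * indicator (A \<inter> B) \<omega>)"
  have iF1: "integrable M F1" unfolding F1_def using AB(1) Z_integrable by (rule integrable_real_mult_indicator)
  have iF2: "integrable M F2" unfolding F2_def using AB(2) Z_integrable by (rule integrable_real_mult_indicator)
  have ih: "integrable M (\<lambda>\<omega>. h (X k (Suc N) \<omega>))"
  proof (rule bounded_integrable)
    show "(\<lambda>\<omega>. h (X k (Suc N) \<omega>)) \<in> borel_measurable M"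
      unfolding h_def using X_rv[OF k, of "Suc N"] by measurable
    show "\<bar>h (X k (Suc N) \<omega>)\<bar> \<le> exp (\<bar>l\<bar> * (1 + \<bar>mu k\<bar>))" if "\<omega> \<in> space M" for \<omega>
      unfolding h_def using increment_bound[of "Suc N" \<omega> l] that by simp
  qed
  have ind: "indep_var borel F2 borel (\<lambda>\<omega>. h (X k (Suc N) \<omega>))"
    unfolding F2_def h_def
    by (intro indep_var_next_reward borel_measurable_times Z_reward_sigma
          borel_measurable_indicator sets.Int A B) measurable
  have "(\<integral>\<omega>. F2 \<omega> * h (X k (Suc N) \<omega>) \<partial>M) = (\<integral>\<omega>. F2 \<omega> \<partial>M) * (\<integral>\<omega>. h (X k (Suc N) \<omega>) \<partial>M)"
    using indep_var_lebesgue_integral[OF ind iF2 ih] by simp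
  also have "\<dots> \<le> (\<integral>\<omega>. F2 \<omega> \<partial>M)"
  proof (rule mult_left_le)
    show "(\<integral>\<omega>. h (X k (Suc N) \<omega>) \<partial>M) \<le> 1" unfolding h_def by (rule hoeffding_increment) simp
    show "0 \<le> (\<integral>\<omega>. F2 \<omega> \<partial>M)" unfolding F2_def
      by (rule Bochner_Integration.integral_nonneg) (simp add: less_imp_le[OF Z_pos])
  qed
  finally have F2_le: "(\<integral>\<omega>. F2 \<omega> * h (X k (Suc N) \<omega>) \<partial>M) \<le> (\<integral>\<omega>. F2 \<omega> \<partial>M)" .
  have "(\<integral>\<omega>. Z l (Suc N) \<omega> * indicator A \<omega> \<partial>M) = (\<integral>\<omega>. F1 \<omega> + F2 \<omega> * h (X k (Suc N) \<omega>) \<partial>M)"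
    by (rule Bochner_Integration.integral_cong)
       (auto simp: F1_def F2_def h_def B_def Z_Suc indicator_def)
  also have "\<dots> = (\<integral>\<omega>. F1 \<omega> \<partial>M) + (\<integral>\<omega>. F2 \<omega> * h (X k (Suc N) \<omega>) \<partial>M)"
    using indep_var_integrable[OF ind iF2 ih] iF1 by simp
  also have "\<dots> \<le> (\<integral>\<omega>. F1 \<omega> \<partial>M) + (\<integral>\<omega>. F2 \<omega> \<partial>M)" using F2_le by simp
  also have "\<dots> = (\<integral>\<omega>. F1 \<omega> + F2 \<omega> \<partial>M)"
    by (rule Bochner_Integration.integral_add[symmetric, OF iF1 iF2])
  also have "\<dots> = (\<integral>\<omega>. Z l N \<omega> * indicator A \<omega> \<partial>M)"
    by (rule Bochner_Integration.integral_cong) (auto simp: F1_def F2_def indicator_def)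
  finally show ?thesis .
qed

lemma Z_level_bound:
  assumes S: "\<And>n. S n \<in> sets (reward_sigma n)" and disj: "disjoint_family S"
  shows "(\<integral>\<^sup>+\<omega>. (\<Sum>n. ennreal ((Z l n \<omega> + Z l' n \<omega>) * indicator (S n) \<omega>)) \<partial>M) \<le> 2"
proof -
  have single: "(\<integral>\<^sup>+\<omega>. (\<Sum>n. ennreal (Z l n \<omega> * indicator (S n) \<omega>)) \<partial>M) \<le> 1" for l
    by (rule supermartingale_disjoint_events[where Y = "Z l", OF reward_filtration reward_sigma_sub Z_integrable
          _ Z_0 Z_supermartingale S disj]) (simp add: less_imp_le[OF Z_pos])
  have SM: "S n \<in> sets M" for n using S reward_sigma_sub by blast
  have meas: "(\<lambda>\<omega>. \<Sum>n. ennreal (Z l n \<omega> * indicator (S n) \<omega>)) \<in> borel_measurable M" for l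
    using Z_measurable SM by measurable
  have "(\<Sum>n. ennreal ((Z l n \<omega> + Z l' n \<omega>) * indicator (S n) \<omega>))
      = (\<Sum>n. ennreal (Z l n \<omega> * indicator (S n) \<omega>)) + (\<Sum>n. ennreal (Z l' n \<omega> * indicator (S n) \<omega>))" for \<omega>
    by (simp add: distrib_right ennreal_plus less_imp_le[OF Z_pos] suminf_add[OF summableI summableI])
  then have "(\<integral>\<^sup>+\<omega>. (\<Sum>n. ennreal ((Z l n \<omega> + Z l' n \<omega>) * indicator (S n) \<omega>)) \<partial>M)
      = (\<integral>\<^sup>+\<omega>. (\<Sum>n. ennreal (Z l n \<omega> * indicator (S n) \<omega>)) \<partial>M)
        + (\<integral>\<^sup>+\<omega>. (\<Sum>n. ennreal (Z l' n \<omega> * indicator (S n) \<omega>)) \<partial>M)"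
    using meas by (simp add: nn_integral_add)
  also have "\<dots> \<le> 1 + 1" using single by (rule add_mono) (rule single)
  finally show ?thesis by simp
qed

lemma deviation_forces_large_Z:
  assumes eps: "eps > 0" and delta: "delta > 0" and s: "s \<ge> 1"
    and pulls: "real (tk sel k n \<omega>) \<ge> eps * real s"
    and dev: "\<bar>muhat X sel k n \<omega> - mu k\<bar> > delta"
  shows "1 \<le> exp (- (2 * eps * delta\<^sup>2)) ^ s * (Z (4 * delta) n \<omega> + Z (- 4 * delta) n \<omega>)"
proof -
  have "eps * real s > 0" using eps s by simp
  then have "real (tk sel k n \<omega>) > 0" using pulls by linarith
  from exponential_deviation_witness[OF this pulls delta dev[unfolded muhat_def]]
  show ?thesis unfolding Z_expand .
qed

lemma deviation_indicator_le_levels: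
  fixes Lam0 :: "'a \<Rightarrow> nat set" and Lam :: "nat \<Rightarrow> 'a \<Rightarrow> nat set"
  assumes eps: "eps > 0" and delta: "delta > 0" and \<omega>: "\<omega> \<in> space M"
    and cover: "Lam0 \<omega> \<subseteq> (\<Union>s\<in>{1..}. Lam s \<omega>)"
    and count: "\<And>s. s \<ge> 1 \<Longrightarrow> n \<in> Lam s \<omega> \<Longrightarrow> real (tk sel k n \<omega>) \<ge> eps * real s"
  shows "(if n \<ge> 1 \<and> n \<in> Lam0 \<omega> \<and> \<bar>muhat X sel k n \<omega> - mu k\<bar> > delta then (1::ennreal) else 0)
    \<le> (\<Sum>s. ennreal (exp (- (2 * eps * delta\<^sup>2)) ^ Suc s)
           * ennreal ((Z (4 * delta) n \<omega> + Z (- 4 * delta) n \<omega>)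
                      * indicator {\<omega> \<in> space M. n \<in> Lam (Suc s) \<omega>} \<omega>))"
    (is "_ \<le> (\<Sum>s. ?b s)")
proof (cases "n \<in> Lam0 \<omega> \<and> \<bar>muhat X sel k n \<omega> - mu k\<bar> > delta")
  case True
  then obtain s where "s \<ge> 1" "n \<in> Lam s \<omega>" using cover by auto
  then obtain s' where s: "s = Suc s'" "n \<in> Lam (Suc s') \<omega>" by (cases s) auto
  have "1 \<le> exp (- (2 * eps * delta\<^sup>2)) ^ Suc s' * (Z (4 * delta) n \<omega> + Z (- 4 * delta) n \<omega>)"
    by (rule deviation_forces_large_Z[OF eps delta _ count]) (use True s(2) in auto)
  then have "1 \<le> ?b s'"
    using s \<omega> Z_pos[of _ n \<omega>] by (simp add: ennreal_mult'[symmetric] ennreal_leI)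
  also have "?b s' \<le> (\<Sum>s. ?b s)" using sum_le_suminf[OF summableI, of "{s'}" ?b] by simp
  finally show ?thesis by simp
qed auto

theorem deviation_count_bound:
  fixes Lam0 :: "'a \<Rightarrow> nat set" and Lam :: "nat \<Rightarrow> 'a \<Rightarrow> nat set"
  assumes eps: "eps > 0" and delta: "delta > 0"
    and cover: "\<And>\<omega>. \<omega> \<in> space M \<Longrightarrow> Lam0 \<omega> \<subseteq> (\<Union>s\<in>{1..}. Lam s \<omega>)"
    and count: "\<And>s n \<omega>. s \<ge> 1 \<Longrightarrow> \<omega> \<in> space M \<Longrightarrow> n \<in> Lam s \<omega> \<Longrightarrow>
                  real (tk sel k n \<omega>) \<ge> eps * real s"
    and single: "\<And>s \<omega> m n. s \<ge> 1 \<Longrightarrow> \<omega> \<in> space M \<Longrightarrow> m \<in> Lam s \<omega> \<Longrightarrow> n \<in> Lam s \<omega> \<Longrightarrow> m = n"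
    and adapted: "\<And>s n. s \<ge> 1 \<Longrightarrow> {\<omega> \<in> space M. n \<in> Lam s \<omega>} \<in> sets (reward_sigma n)"
  shows "(\<integral>\<^sup>+ \<omega>. (\<Sum>n. if n \<ge> 1 \<and> n \<in> Lam0 \<omega> \<and> \<bar>muhat X sel k n \<omega> - mu k\<bar> > delta
                        then (1::ennreal) else 0) \<partial>M)
         \<le> ennreal (1 / (eps * delta\<^sup>2))"
proof -
  define q where "q = exp (- (2 * eps * delta\<^sup>2))"
  define S where "S s n = {\<omega> \<in> space M. n \<in> Lam (Suc s) \<omega>}" for s n
  define V where "V s \<omega> = (\<Sum>n. ennreal ((Z (4 * delta) n \<omega> + Z (- 4 * delta) n \<omega>) * indicator (S s n) \<omega>))"
    for s \<omega>
  have S: "S s n \<in> sets (reward_sigma n)" for s n using adapted unfolding S_def by simp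
  have S_disj: "disjoint_family (S s)" for s
    using single[of "Suc s"] unfolding S_def disjoint_family_on_def by auto
  have SM: "S s n \<in> sets M" for s n using S reward_sigma_sub by blast
  have V_meas: "V s \<in> borel_measurable M" for s
    unfolding V_def using Z_measurable SM by measurable
  have dominated: "(\<Sum>n. if n \<ge> 1 \<and> n \<in> Lam0 \<omega> \<and> \<bar>muhat X sel k n \<omega> - mu k\<bar> > delta
                        then (1::ennreal) else 0) \<le> (\<Sum>s. ennreal (q ^ Suc s) * V s \<omega>)"
    if \<omega>: "\<omega> \<in> space M" for \<omega>
    unfolding V_def S_def q_def ennreal_suminf_cmult[symmetric]
    by (rule suminf_le_double_suminf, rule deviation_indicator_le_levels[OF eps delta \<omega>])
       (use cover count \<omega> in auto)
  have "(\<integral>\<^sup>+ \<omega>. (\<Sum>n. if n \<ge> 1 \<and> n \<in> Lam0 \<omega> \<and> \<bar>muhat X sel k n \<omega> - mu k\<bar> > delta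
                        then (1::ennreal) else 0) \<partial>M)
      \<le> (\<integral>\<^sup>+ \<omega>. (\<Sum>s. ennreal (q ^ Suc s) * V s \<omega>) \<partial>M)"
    by (intro nn_integral_mono dominated)
  also have "\<dots> = (\<Sum>s. ennreal (q ^ Suc s) * (\<integral>\<^sup>+ \<omega>. V s \<omega> \<partial>M))"
    using V_meas by (simp add: nn_integral_suminf nn_integral_cmult)
  also have "\<dots> \<le> (\<Sum>s. ennreal (q ^ Suc s) * 2)"
    unfolding V_def by (intro suminf_le summableI mult_left_mono Z_level_bound[OF S S_disj]) simp
  also have "\<dots> = 2 * (\<Sum>s. ennreal (q ^ Suc s))" by (simp add: mult.commute)
  also have "\<dots> \<le> 2 * ennreal (1 / (2 * eps * delta\<^sup>2))"
    unfolding q_def using eps delta by (intro mult_left_mono geometric_tail_le) auto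
  also have "\<dots> = ennreal (1 / (eps * delta\<^sup>2))"
    using eps delta by (subst ennreal_numeral[symmetric], subst ennreal_mult[symmetric]) auto
  finally show ?thesis .
qed

end

text \<open>The theorem as stated in the paper: adaptedness to \<open>\<F>_n\<close> implies adaptedness to the
  reward filtration.\<close>
theorem lemma2:
  fixes M :: "'a measure" and K :: nat
    and X :: "nat \<Rightarrow> nat \<Rightarrow> 'a \<Rightarrow> real" and mu :: "nat \<Rightarrow> real"
    and sel :: "nat \<Rightarrow> 'a \<Rightarrow> nat"
    and k :: nat and eps delta :: real
    and Lam0 :: "'a \<Rightarrow> nat set" and Lam :: "nat \<Rightarrow> 'a \<Rightarrow> nat set"
  assumes P: "prob_space M"
    and K: "K \<ge> 1"
    and X_rv: "\<And>j t. j \<in> {1..K} \<Longrightarrow> t \<ge> 1 \<Longrightarrow> X j t \<in> borel_measurable M"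
    and X_range: "\<And>j t \<omega>. j \<in> {1..K} \<Longrightarrow> t \<ge> 1 \<Longrightarrow> \<omega> \<in> space M \<Longrightarrow> X j t \<omega> \<in> {0..1}"
    and X_indep: "prob_space.indep_vars M (\<lambda>_. borel) (\<lambda>(j, t). X j t) ({1..K} \<times> {1..})"
    and X_ident: "\<And>j t. j \<in> {1..K} \<Longrightarrow> t \<ge> 1 \<Longrightarrow> distr M borel (X j t) = distr M borel (X j 1)"
    and X_mean: "\<And>j. j \<in> {1..K} \<Longrightarrow> prob_space.expectation M (X j 1) = mu j"
    and sel_range: "\<And>n \<omega>. n \<ge> 1 \<Longrightarrow> \<omega> \<in> space M \<Longrightarrow> sel n \<omega> \<in> {1..K}"
    and sel_rv: "\<And>n. n \<ge> 1 \<Longrightarrow> sel n \<in> measurable M (count_space UNIV)"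
    and sel_policy: "\<And>n. n \<ge> 1 \<Longrightarrow> sel n \<in> measurable (hist_sigma M X sel n) (count_space UNIV)"
    and k: "k \<in> {1..K}"
    and eps: "eps > 0"
    and Lam0_rv: "\<And>n. {\<omega> \<in> space M. n \<in> Lam0 \<omega>} \<in> sets M"
    and cover: "\<And>\<omega>. \<omega> \<in> space M \<Longrightarrow> Lam0 \<omega> \<subseteq> (\<Union>s\<in>{1..}. Lam s \<omega>)"
    and count: "\<And>s n \<omega>. s \<ge> 1 \<Longrightarrow> \<omega> \<in> space M \<Longrightarrow> n \<in> Lam s \<omega> \<Longrightarrow>
                  real (tk sel k n \<omega>) \<ge> eps * real s"
    and single: "\<And>s \<omega> m n. s \<ge> 1 \<Longrightarrow> \<omega> \<in> space M \<Longrightarrow> m \<in> Lam s \<omega> \<Longrightarrow> n \<in> Lam s \<omega> \<Longrightarrow> m = n"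
    and adapted: "\<And>s n. s \<ge> 1 \<Longrightarrow> {\<omega> \<in> space M. n \<in> Lam s \<omega>} \<in> sets (Fsig M K X sel n)"
    and delta: "delta > 0"
  shows "(\<integral>\<^sup>+ \<omega>. (\<Sum>n. if n \<ge> 1 \<and> n \<in> Lam0 \<omega> \<and> \<bar>muhat X sel k n \<omega> - mu k\<bar> > delta
                        then (1::ennreal) else 0) \<partial>M)
         \<le> ennreal (1 / (eps * delta\<^sup>2))"
proof -
  interpret bandit M K X mu sel k
    by (intro bandit.intro bandit_axioms.intro P X_rv X_range X_indep X_ident X_mean
          sel_range sel_policy k)
  have "{\<omega> \<in> space M. n \<in> Lam s \<omega>} \<in> sets (reward_sigma n)" if "s \<ge> 1" for s n
    using subsetD[OF Fsig_subset_reward_sigma adapted[OF that]] .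
  with eps delta cover count single show ?thesis by (rule deviation_count_bound[where Lam = Lam])
qed

end
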